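(* For every $i\in\{0,1,2,3\}$ the subshift $(X_i,T)$ has zero topological entropy.
   Context: Let $\tau:\mathbb N\to(0,\infty)$ be non-increasing with $\tau(n)\to0$. Fix integers $2\le q_1<q_2<\cdots$ such that for every $k\ge1$: (i) $q_{k+1}>q_k^4+3q_k$; (ii) $\tau(\lceil q_{k+1}/3\rceil)<\frac1{16q_k}$. For $k\ge1$ put $q^{(0)}_k=q_{2k}$, $q^{(1)}_k=q_{2k+1}$, $q^{(2)}_k=q^{(0)}_k-1$, $q^{(3)}_k=q^{(1)}_k-1$, and $L^{(i)}_k=\lfloor q^{(i)}_{k+1}/(3q^{(i)}_k)\rfloor$. Let $s^{(i)}_k\in\{-1,0,1\}^{\mathbb N}$ (indices $n\ge1$) be given by $s^{(i)}_k(n)=1$ if $n=jq^{(i)}_k$ with $1\le j\le L^{(i)}_k$, $s^{(i)}_k(n)=-1$ if $n=jq^{(i)}_k$ with $L^{(i)}_k<j\le2L^{(i)}_k$, and $s^{(i)}_k(n)=0$ otherwise. For $w\in\{-1,0,1\}^{\mathbb N}$ and $p\in\mathbb N_0$ let $\sigma^{-p}w$ be defined by $(\sigma^{-p}w)(n)=0$ for $1\le n\le p$ and $(\sigma^{-p}w)(n)=w(n-p)$ for $n>p$. For $l\le m$ write $w|_l^m=(w_l,\dots,w_m)$. Let $R^{(i)}_k=\{(\sigma^{-p}s^{(i)}_k)|_{q^{(i)}_k}^{q^{(i)}_{k+1}-1}:p=0,1,\dots,q^{(i)}_k\}$ and $P^{(i)}=\{y\in\{-1,0,1\}^{\mathbb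 N}: y(n)=0\text{ for }1\le n<q^{(i)}_1,\ y|_{q^{(i)}_k}^{q^{(i)}_{k+1}-1}\in R^{(i)}_k\text{ for all }k\ge1\}$. Let $Z=\{-1,0,1\}^{\mathbb N}\times\{-1,0,1\}^{\mathbb Z}$, where each factor carries the metric $d(u,v)=3^{-\min\{|m|:u_m\neq v_m\}}$ and $Z$ the maximum of the two coordinate metrics. $\sigma$ is the left shift $(\sigma u)_m=u_{m+1}$ (invertible on $\{-1,0,1\}^{\mathbb Z}$). Define $T:Z\to Z$, $T(y,z)=(\sigma y,\sigma^{y_1}z)$, and for $i\in\{0,1,2,3\}$ let $X_i=\overline{\bigcup_{n\ge0}T^n(P^{(i)}\times\{-1,0,1\}^{\mathbb Z})}$ (a closed $T$-invariant subset of $Z$). *)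

theory Defs
  imports "HOL-Analysis.Analysis"
begin

text \<open>One-sided sequences in {-1,0,1}^N (indices n >= 1) are represented as functions
  nat => int; the (meaningless) coordinate 0 is normalised to 0.
  Two-sided sequences are functions int => int.\<close>

definition Yspace :: "(nat \<Rightarrow> int) set" where
  "Yspace = {y. y 0 = 0 \<and> (\<forall>n\<ge>1. y n \<in> {-1,0,1})}"

definition Zspace2 :: "(int \<Rightarrow> int) set" where
  "Zspace2 = {z. \<forall>m. z m \<in> {-1,0,1}}"

definition Zspace :: "((nat \<Rightarrow> int) \<times> (int \<Rightarrow> int)) set" where
  "Zspace = Yspace \<times> Zspace2"

definition dY :: "(nat \<Rightarrow> int) \<Rightarrow> (nat \<Rightarrow> int) \<Rightarrow> real" where
  "dY u v = (if (\<forall>m\<ge>1. u m = v m) then 0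
             else 3 powr (- real (LEAST m. m \<ge> 1 \<and> u m \<noteq> v m)))"

definition dZ2 :: "(int \<Rightarrow> int) \<Rightarrow> (int \<Rightarrow> int) \<Rightarrow> real" where
  "dZ2 u v = (if u = v then 0
             else 3 powr (- real (LEAST k::nat. \<exists>m. nat \<bar>m\<bar> = k \<and> u m \<noteq> v m)))"

definition dZ :: "((nat \<Rightarrow> int) \<times> (int \<Rightarrow> int)) \<Rightarrow> ((nat \<Rightarrow> int) \<times> (int \<Rightarrow> int)) \<Rightarrow> real" where
  "dZ a b = max (dY (fst a) (fst b)) (dZ2 (snd a) (snd b))"

definition shiftY :: "(nat \<Rightarrow> int) \<Rightarrow> (nat \<Rightarrow> int)" where
  "shiftY y = (\<lambda>n. if n = 0 then 0 else y (Suc n))"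

definition shiftZpow :: "int \<Rightarrow> (int \<Rightarrow> int) \<Rightarrow> (int \<Rightarrow> int)" where
  "shiftZpow k z = (\<lambda>m. z (m + k))"

definition Tmap :: "((nat \<Rightarrow> int) \<times> (int \<Rightarrow> int)) \<Rightarrow> ((nat \<Rightarrow> int) \<times> (int \<Rightarrow> int))" where
  "Tmap p = (shiftY (fst p), shiftZpow (fst p 1) (snd p))"

definition qq :: "(nat \<Rightarrow> nat) \<Rightarrow> nat \<Rightarrow> nat \<Rightarrow> nat" where
  "qq q i k = (if i = 0 then q (2*k) else if i = 1 then q (2*k+1)
               else if i = 2 then q (2*k) - 1 else q (2*k+1) - 1)"

definition LL :: "(nat \<Rightarrow> nat) \<Rightarrow> nat \<Rightarrow> nat \<Rightarrow> nat" where
  "LL q i k = qq q i (Suc k) div (3 * qq q i k)"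

definition sw :: "(nat \<Rightarrow> nat) \<Rightarrow> nat \<Rightarrow> nat \<Rightarrow> nat \<Rightarrow> int" where
  "sw q i k n = (if (\<exists>j. 1 \<le> j \<and> j \<le> LL q i k \<and> n = j * qq q i k) then 1
                 else if (\<exists>j. LL q i k < j \<and> j \<le> 2 * LL q i k \<and> n = j * qq q i k) then -1
                 else 0)"

definition shiftR :: "nat \<Rightarrow> (nat \<Rightarrow> int) \<Rightarrow> (nat \<Rightarrow> int)" where
  "shiftR p w = (\<lambda>n. if n \<le> p then 0 else w (n - p))"

definition inR :: "(nat \<Rightarrow> nat) \<Rightarrow> nat \<Rightarrow> nat \<Rightarrow> (nat \<Rightarrow> int) \<Rightarrow> bool" where
  "inR q i k y = (\<exists>p \<le> qq q i k. \<forall>n. qq q i k \<le> n \<and> n \<le> qq q i (Suc k) - 1 \<longrightarrow>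
                     y n = shiftR p (sw q i k) n)"

definition Pset :: "(nat \<Rightarrow> nat) \<Rightarrow> nat \<Rightarrow> (nat \<Rightarrow> int) set" where
  "Pset q i = {y \<in> Yspace. (\<forall>n. 1 \<le> n \<and> n < qq q i 1 \<longrightarrow> y n = 0) \<and> (\<forall>k\<ge>1. inR q i k y)}"

definition dclosure :: "('a \<Rightarrow> 'a \<Rightarrow> real) \<Rightarrow> 'a set \<Rightarrow> 'a set \<Rightarrow> 'a set" where
  "dclosure d S A = {x \<in> S. \<forall>e>0. \<exists>a\<in>A. d x a < e}"

definition Xset :: "(nat \<Rightarrow> nat) \<Rightarrow> nat \<Rightarrow> ((nat \<Rightarrow> int) \<times> (int \<Rightarrow> int)) set" where
  "Xset q i = dclosure dZ Zspace (\<Union>n. (Tmap ^^ n) ` (Pset q i \<times> Zspace2))"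

definition bowen_dist :: "('a \<Rightarrow> 'a \<Rightarrow> real) \<Rightarrow> ('a \<Rightarrow> 'a) \<Rightarrow> nat \<Rightarrow> 'a \<Rightarrow> 'a \<Rightarrow> real" where
  "bowen_dist d T n x y = Max ({d ((T ^^ k) x) ((T ^^ k) y) | k. k < n} \<union> {0})"

definition separated :: "'a set \<Rightarrow> ('a \<Rightarrow> 'a \<Rightarrow> real) \<Rightarrow> ('a \<Rightarrow> 'a) \<Rightarrow> nat \<Rightarrow> real \<Rightarrow> 'a set \<Rightarrow> bool" where
  "separated X d T n e E \<longleftrightarrow> E \<subseteq> X \<and> finite E \<and>
     (\<forall>x\<in>E. \<forall>y\<in>E. x \<noteq> y \<longrightarrow> bowen_dist d T n x y > e)"

definition sep_num :: "'a set \<Rightarrow> ('a \<Rightarrow> 'a \<Rightarrow> real) \<Rightarrow> ('a \<Rightarrow> 'a) \<Rightarrow> nat \<Rightarrow> real \<Rightarrow> ereal" where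
  "sep_num X d T n e = (SUP E \<in> {E. separated X d T n e E}. ereal (real (card E)))"

definition log_sep_rate :: "'a set \<Rightarrow> ('a \<Rightarrow> 'a \<Rightarrow> real) \<Rightarrow> ('a \<Rightarrow> 'a) \<Rightarrow> real \<Rightarrow> nat \<Rightarrow> ereal" where
  "log_sep_rate X d T e n = (if sep_num X d T n e = \<infinity> then \<infinity>
      else ereal (ln (real_of_ereal (sep_num X d T n e)) / real n))"

text \<open>h(T) = lim_{e\<rightarrow>0} limsup_n (1/n) log s(n,e) = sup_{e>0} limsup_n ... (monotone in e).\<close>
definition top_entropy :: "'a set \<Rightarrow> ('a \<Rightarrow> 'a \<Rightarrow> real) \<Rightarrow> ('a \<Rightarrow> 'a) \<Rightarrow> ereal" where
  "top_entropy X d T = (SUP e \<in> {0<..}. limsup (log_sep_rate X d T e))"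

end

theory Submission
  imports Defs "HOL-Real_Asymp.Real_Asymp"
begin

text \<open>Call \<open>y\<close> \<open>D\<close>-spaced if its nonzero symbols beyond position \<open>D\<close> are at least \<open>D\<close> apart.
  By lacunarity of the levels \<open>qq q i k\<close>, every \<open>y \<in> Pset q i\<close> is \<open>qq q i K\<close>-spaced for every
  \<open>K \<ge> 1\<close>, and spacing survives shifts and limits, so it holds for the first coordinate of
  every point of \<open>Xset q i\<close>. A \<open>D\<close>-spaced word of length \<open>L\<close> is determined by its first \<open>D\<close>
  symbols and at most one symbol in each further block of length \<open>D\<close>, which leaves at most
  \<open>3^D * (2D+1)^(L/D)\<close> choices; and along an orbit segment of length \<open>n\<close> the second coordinate
  is shifted by a partial sum of \<open>y\<close>, which spacing bounds by \<open>D + n/D\<close>. Hence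
  \<open>(n, e)\<close>-separated sets have at most \<open>exp (n * (ln (2D+1) + 2 ln 3) / D + C(D, e))\<close> points,
  and letting \<open>D \<rightarrow> \<infinity>\<close> the entropy vanishes.\<close>

section \<open>Spaced sequences and their number\<close>

definition spaced :: "nat \<Rightarrow> (nat \<Rightarrow> int) \<Rightarrow> bool" where
  "spaced D y \<longleftrightarrow> (\<forall>a b. D \<le> a \<longrightarrow> a < b \<longrightarrow> y a \<noteq> 0 \<longrightarrow> y b \<noteq> 0 \<longrightarrow> a + D \<le> b)"

lemma spaced_restrict: "spaced D y \<Longrightarrow> spaced D (\<lambda>j. if P j then y j else 0)"
  unfolding spaced_def by auto

lemma spaced_shift:
  assumes "spaced D y" and "D \<ge> 1" and "\<forall>n\<ge>1. y' n = y (n + m)"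
  shows "spaced D y'"
  unfolding spaced_def
proof (intro allI impI)
  fix a b assume ab: "D \<le> a" "a < b" "y' a \<noteq> 0" "y' b \<noteq> 0"
  then have "y (a + m) \<noteq> 0" "y (b + m) \<noteq> 0" using assms(2,3) by auto
  then have "a + m + D \<le> b + m" using assms(1) ab unfolding spaced_def by simp
  then show "a + D \<le> b" by simp
qed

lemma supported_functions_subset:
  "{g. (\<forall>j. g j \<noteq> 0 \<longrightarrow> j \<in> A) \<and> (\<forall>j. g j \<in> V)}
     \<subseteq> (\<lambda>f j. if j \<in> A then f j else 0) ` (A \<rightarrow>\<^sub>E V)"
proof
  fix g assume g: "g \<in> {g. (\<forall>j. g j \<noteq> 0 \<longrightarrow> j \<in> A) \<and> (\<forall>j. g j \<in> V)}"
  then have "g = (\<lambda>j. if j \<in> A then restrict g A j else 0)" by (auto intro!: ext)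
  moreover have "restrict g A \<in> A \<rightarrow>\<^sub>E V" using g by auto
  ultimately show "g \<in> (\<lambda>f j. if j \<in> A then f j else 0) ` (A \<rightarrow>\<^sub>E V)" by blast
qed

lemma
  fixes V :: "'b::zero set"
  assumes "finite A" and "finite V"
  shows finite_supported_functions: "finite {g. (\<forall>j. g j \<noteq> 0 \<longrightarrow> j \<in> A) \<and> (\<forall>j. g j \<in> V)}"
    and card_supported_functions_le:
      "card {g. (\<forall>j. g j \<noteq> 0 \<longrightarrow> j \<in> A) \<and> (\<forall>j. g j \<in> V)} \<le> card V ^ card A"
proof -
  let ?F = "(\<lambda>f j. if j \<in> A then f j else (0::'b)) ` (A \<rightarrow>\<^sub>E V)"
  have fin: "finite ?F" using assms by (simp add: finite_PiE)
  then show "finite {g. (\<forall>j. g j \<noteq> 0 \<longrightarrow> j \<in> A) \<and> (\<forall>j. g j \<in> V)}"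
    using supported_functions_subset by (rule finite_subset[rotated])
  have "card {g. (\<forall>j. g j \<noteq> 0 \<longrightarrow> j \<in> A) \<and> (\<forall>j. g j \<in> V)} \<le> card ?F"
    using supported_functions_subset fin by (rule card_mono[rotated])
  also have "\<dots> \<le> card (A \<rightarrow>\<^sub>E V)" by (rule card_image_le) (use assms in \<open>simp add: finite_PiE\<close>)
  also have "\<dots> = card V ^ card A" using assms(1) by (simp add: card_PiE)
  finally show "card {g. (\<forall>j. g j \<noteq> 0 \<longrightarrow> j \<in> A) \<and> (\<forall>j. g j \<in> V)} \<le> card V ^ card A" .
qed

definition spaced_words :: "nat \<Rightarrow> nat set \<Rightarrow> (nat \<Rightarrow> int) set" where
  "spaced_words D S = {w. (\<forall>j. w j \<noteq> 0 \<longrightarrow> j \<in> S) \<and> (\<forall>j. w j \<in> {-1,0,1}) \<and> spaced D w}"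

lemma
  assumes "finite S"
  shows finite_spaced_words: "finite (spaced_words D S)"
    and card_spaced_words_le: "card (spaced_words D S) \<le> 3 ^ card S"
proof -
  have sub: "spaced_words D S \<subseteq> {g. (\<forall>j. g j \<noteq> 0 \<longrightarrow> j \<in> S) \<and> (\<forall>j. g j \<in> {-1,0,1::int})}"
    unfolding spaced_words_def by blast
  show "finite (spaced_words D S)"
    using finite_supported_functions[OF assms, of "{-1,0,1::int}"] sub by (auto intro: finite_subset)
  show "card (spaced_words D S) \<le> 3 ^ card S"
    using card_supported_functions_le[OF assms, of "{-1,0,1::int}"]
      card_mono[OF finite_supported_functions[OF assms] sub]
    by (simp add: numeral_3_eq_3)
qed

lemma
  assumes "finite (spaced_words D S)" and "finite (spaced_words D T)"
  shows finite_spaced_words_Un: "finite (spaced_words D (S \<union> T))"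
    and card_spaced_words_Un_le:
      "card (spaced_words D (S \<union> T)) \<le> card (spaced_words D S) * card (spaced_words D T)"
proof -
  let ?split = "\<lambda>w. ((\<lambda>j. if j \<in> S then w j else 0), (\<lambda>j. if j \<notin> S then w j else 0))"
  have inj: "inj_on ?split (spaced_words D (S \<union> T))"
  proof (rule inj_onI)
    fix w w' assume "?split w = ?split w'"
    then have "w j = w' j" for j by (cases "j \<in> S") (auto dest: fun_cong[where x = j])
    then show "w = w'" by blast
  qed
  have "?split w \<in> spaced_words D S \<times> spaced_words D T" if "w \<in> spaced_words D (S \<union> T)" for w
    using that spaced_restrict[of D w "\<lambda>j. j \<in> S"] spaced_restrict[of D w "\<lambda>j. j \<notin> S"]
    unfolding spaced_words_def by (auto simp: if_distrib)
  then have sub: "?split ` spaced_words D (S \<union> T) \<subseteq> spaced_words D S \<times> spaced_words D T" by blast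
  have fin: "finite (spaced_words D S \<times> spaced_words D T)" using assms by simp
  show "finite (spaced_words D (S \<union> T))" by (rule inj_on_finite[OF inj sub fin])
  show "card (spaced_words D (S \<union> T)) \<le> card (spaced_words D S) * card (spaced_words D T)"
    using card_inj_on_le[OF inj sub fin] by (simp add: card_cartesian_product)
qed

lemma spaced_words_window_subset:
  assumes "D \<le> L"
  shows "spaced_words D {L<..L + D}
           \<subseteq> insert (\<lambda>_. 0) ((\<lambda>(j, s) x. if x = j then s else 0) ` ({L<..L + D} \<times> {-1, 1}))"
proof
  fix g assume g: "g \<in> spaced_words D {L<..L + D}"
  then have win: "g x \<noteq> 0 \<Longrightarrow> x \<in> {L<..L + D}" and sp: "spaced D g"
    and vals: "g x \<in> {-1, 0, 1}" for x
    unfolding spaced_words_def by auto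
  show "g \<in> insert (\<lambda>_. 0) ((\<lambda>(j, s) x. if x = j then s else 0) ` ({L<..L + D} \<times> {-1, 1}))"
  proof (cases "\<exists>j. g j \<noteq> 0")
    case False then show ?thesis by auto
  next
    case True
    then obtain j where j: "g j \<noteq> 0" by blast
    have unique: "x = j" if x: "g x \<noteq> 0" for x
    proof (rule ccontr)
      assume "x \<noteq> j"
      then consider "x < j" | "j < x" by linarith
      then show False
      proof cases
        case 1
        then have "x + D \<le> j" using sp j x win[OF x] assms unfolding spaced_def by simp
        then show False using win[OF x] win[OF j] by simp
      next
        case 2
        then have "j + D \<le> x" using sp j x win[OF j] assms unfolding spaced_def by simp
        then show False using win[OF x] win[OF j] by simp
      qed
    qed
    have "g = (\<lambda>x. if x = j then g j else 0)"
    proof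
      fix x show "g x = (if x = j then g j else 0)" using unique[of x] by (cases "g x = 0") auto
    qed
    moreover have "(j, g j) \<in> {L<..L + D} \<times> {-1, 1}" using win[OF j] vals[of j] j by auto
    ultimately show ?thesis by (intro insertI2 image_eqI[where x = "(j, g j)"]) simp_all
  qed
qed

lemma
  assumes "D \<le> L"
  shows finite_spaced_words_window: "finite (spaced_words D {L<..L + D})"
    and card_spaced_words_window_le: "card (spaced_words D {L<..L + D}) \<le> 2 * D + 1"
proof -
  let ?I = "{L<..L + D} \<times> {-1, 1::int}"
  let ?W = "insert (\<lambda>_. 0) ((\<lambda>(j, s) x. if x = j then s else 0) ` ?I)"
  have fin: "finite ?W" by simp
  then show "finite (spaced_words D {L<..L + D})"
    using spaced_words_window_subset[OF assms] by (rule finite_subset[rotated])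
  have "card (spaced_words D {L<..L + D}) \<le> card ?W"
    using spaced_words_window_subset[OF assms] fin by (rule card_mono[rotated])
  also have "\<dots> \<le> Suc (card ((\<lambda>(j, s) x. if x = j then s else 0) ` ?I))"
    by (rule card_insert_le_m1) simp_all
  also have "card ((\<lambda>(j, s) x. if x = j then s else 0) ` ?I) \<le> card ?I" by (rule card_image_le) simp
  also have "card ?I = 2 * D" by (simp add: card_cartesian_product)
  finally show "card (spaced_words D {L<..L + D}) \<le> 2 * D + 1" by simp
qed

lemma
  assumes "D \<ge> 1"
  shows finite_spaced_words_initial: "finite (spaced_words D {1..D * Suc r})"
    and card_spaced_words_initial_le: "card (spaced_words D {1..D * Suc r}) \<le> 3 ^ D * (2 * D + 1) ^ r"
proof (induction r)
  case 0
  { case 1 show ?case by (simp add: finite_spaced_words) }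
  { case 2 show ?case using card_spaced_words_le[of "{1..D}" D] by simp }
next
  case (Suc r)
  have split: "{1..D * Suc (Suc r)} = {1..D * Suc r} \<union> {D * Suc r<..D * Suc r + D}" by auto
  have window: "D \<le> D * Suc r" by simp
  note fin = Suc.IH(1) finite_spaced_words_window[OF window]
  { case 1 show ?case unfolding split by (rule finite_spaced_words_Un[OF fin]) }
  { case 2
    have "card (spaced_words D {1..D * Suc (Suc r)})
          \<le> card (spaced_words D {1..D * Suc r}) * card (spaced_words D {D * Suc r<..D * Suc r + D})"
      unfolding split by (rule card_spaced_words_Un_le[OF fin])
    also have "\<dots> \<le> 3 ^ D * (2 * D + 1) ^ r * (2 * D + 1)"
      using Suc.IH(2) card_spaced_words_window_le[OF window] by (rule mult_le_mono)
    also have "\<dots> = 3 ^ D * (2 * D + 1) ^ Suc r" by (simp only: power_Suc2 mult.assoc)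
    finally show ?case . }
qed

lemma card_nonzero_spaced_le:
  assumes "spaced D y" and "D \<ge> 1"
  shows "card {j \<in> {D..k}. y j \<noteq> 0} \<le> k div D"
proof -
  let ?S = "{j \<in> {D..k}. y j \<noteq> 0}"
  have "inj_on (\<lambda>j. j div D) ?S"
  proof (rule inj_onI)
    fix a b assume a: "a \<in> ?S" and b: "b \<in> ?S" and eq: "a div D = b div D"
    have "a + D \<le> b \<Longrightarrow> False" "b + D \<le> a \<Longrightarrow> False"
      using div_le_mono[of "a + D" b D] div_le_mono[of "b + D" a D] eq assms(2) by auto
    moreover have "a < b \<Longrightarrow> a + D \<le> b" "b < a \<Longrightarrow> b + D \<le> a"
      using a b assms(1) unfolding spaced_def by auto
    ultimately show "a = b" by (cases a b rule: linorder_cases) auto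
  qed
  moreover have "(\<lambda>j. j div D) ` ?S \<subseteq> {1..k div D}"
    using div_le_mono[of D _ D] div_le_mono[of _ k D] assms(2) by fastforce
  ultimately have "card ?S \<le> card {1..k div D}" by (intro card_inj_on_le) auto
  then show ?thesis by simp
qed

definition partial_sum :: "(nat \<Rightarrow> int) \<Rightarrow> nat \<Rightarrow> int" where
  "partial_sum y k = (\<Sum>j = 1..k. y j)"

lemma abs_partial_sum_le_if_spaced:
  assumes vals: "\<forall>j\<ge>1. y j \<in> {-1, 0, 1}" and "spaced D y" and "D \<ge> 1"
  shows "\<bar>partial_sum y k\<bar> \<le> int (D + k div D)"
proof -
  let ?N = "{j \<in> {1..k}. y j \<noteq> 0}"
  have "partial_sum y k = (\<Sum>j\<in>?N. y j)"
    unfolding partial_sum_def by (rule sum.mono_neutral_right) auto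
  then have "\<bar>partial_sum y k\<bar> \<le> (\<Sum>j\<in>?N. \<bar>y j\<bar>)" by (simp add: sum_abs)
  also have "\<dots> = (\<Sum>j\<in>?N. 1)" using vals by (intro sum.cong) auto
  also have "\<dots> = int (card ?N)" by simp
  also have "card ?N \<le> card ({1..<D} \<union> {j \<in> {D..k}. y j \<noteq> 0})" by (rule card_mono) auto
  also have "\<dots> \<le> card {1..<D} + card {j \<in> {D..k}. y j \<noteq> 0}" by (rule card_Un_le)
  also have "\<dots> \<le> D + k div D" using card_nonzero_spaced_le[OF assms(2,3), of k] by simp
  finally show ?thesis by linarith
qed

section \<open>Orbits of the skew product\<close>

lemma fst_Tmap_iterate: "n \<ge> 1 \<Longrightarrow> fst ((Tmap ^^ k) x) n = fst x (n + k)"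
proof (induction k arbitrary: n)
  case 0 then show ?case by simp
next
  case (Suc k) then show ?case by (simp add: Tmap_def shiftY_def)
qed

lemma snd_Tmap_iterate: "snd ((Tmap ^^ k) x) = shiftZpow (partial_sum (fst x) k) (snd x)"
proof (induction k)
  case 0 then show ?case by (simp add: partial_sum_def shiftZpow_def)
next
  case (Suc k)
  have "partial_sum (fst x) (Suc k) = fst ((Tmap ^^ k) x) 1 + partial_sum (fst x) k"
    by (simp add: partial_sum_def fst_Tmap_iterate)
  moreover have "snd ((Tmap ^^ Suc k) x) = shiftZpow (fst ((Tmap ^^ k) x) 1) (snd ((Tmap ^^ k) x))"
    by (simp add: Tmap_def[of "(Tmap ^^ k) x"])
  ultimately show ?case using Suc.IH by (simp add: shiftZpow_def algebra_simps)
qed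

lemma dY_less_imp_eq:
  assumes "dY u v < 3 powr - real b" and "1 \<le> m" and "m \<le> b"
  shows "u m = v m"
proof (rule ccontr)
  assume ne: "u m \<noteq> v m"
  let ?L = "LEAST m. m \<ge> 1 \<and> u m \<noteq> v m"
  have "?L \<le> b" using ne assms(2,3) Least_le[of "\<lambda>m. m \<ge> 1 \<and> u m \<noteq> v m" m] by simp
  then have "3 powr - real b \<le> 3 powr - real ?L" by (intro powr_mono) auto
  moreover have "dY u v = 3 powr - real ?L" unfolding dY_def using ne assms(2) by auto
  ultimately show False using assms(1) by simp
qed

lemma dY_le_if_agree:
  assumes "\<And>m. 1 \<le> m \<Longrightarrow> m \<le> M \<Longrightarrow> u m = v m"
  shows "dY u v \<le> 3 powr - real (Suc M)"
proof (cases "\<forall>m\<ge>1. u m = v m")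
  case True then show ?thesis unfolding dY_def by simp
next
  case False
  let ?L = "LEAST m. m \<ge> 1 \<and> u m \<noteq> v m"
  have "\<exists>m. m \<ge> 1 \<and> u m \<noteq> v m" using False by blast
  then have "?L \<ge> 1 \<and> u ?L \<noteq> v ?L" by (rule LeastI_ex)
  then have "\<not> ?L \<le> M" using assms[of ?L] by auto
  then have "?L \<ge> Suc M" by simp
  then have "3 powr - real ?L \<le> 3 powr - real (Suc M)" by (intro powr_mono) auto
  then show ?thesis unfolding dY_def using False by simp
qed

lemma dZ2_le_if_agree:
  assumes "\<And>m. \<bar>m\<bar> \<le> int M \<Longrightarrow> u m = v m"
  shows "dZ2 u v \<le> 3 powr - real (Suc M)"
proof (cases "u = v")
  case True then show ?thesis unfolding dZ2_def by simp
next
  case False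
  let ?L = "LEAST k. \<exists>m. nat \<bar>m\<bar> = k \<and> u m \<noteq> v m"
  have "\<exists>k m. nat \<bar>m\<bar> = k \<and> u m \<noteq> v m" using False by auto
  then obtain m where m: "nat \<bar>m\<bar> = ?L" "u m \<noteq> v m" by (rule exE[OF LeastI_ex]) blast
  then have "\<bar>m\<bar> > int M" using assms by (meson not_le)
  then have "?L \<ge> Suc M" using m(1) by linarith
  then have "3 powr - real ?L \<le> 3 powr - real (Suc M)" by (intro powr_mono) auto
  then show ?thesis unfolding dZ2_def using False by simp
qed

lemma dZ_Tmap_iterate_le:
  assumes "\<And>j. 1 \<le> j \<Longrightarrow> j \<le> k + M \<Longrightarrow> fst x j = fst x' j"
    and "\<And>m. \<bar>m\<bar> \<le> \<bar>partial_sum (fst x) k\<bar> + int M \<Longrightarrow> snd x m = snd x' m"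
  shows "dZ ((Tmap ^^ k) x) ((Tmap ^^ k) x') \<le> 3 powr - real (Suc M)"
proof -
  have "fst ((Tmap ^^ k) x) j = fst ((Tmap ^^ k) x') j" if "1 \<le> j" "j \<le> M" for j
    using that assms(1)[of "j + k"] by (simp add: fst_Tmap_iterate)
  then have y: "dY (fst ((Tmap ^^ k) x)) (fst ((Tmap ^^ k) x')) \<le> 3 powr - real (Suc M)"
    by (rule dY_le_if_agree)
  have same_sum: "partial_sum (fst x) k = partial_sum (fst x') k"
    unfolding partial_sum_def using assms(1) by (intro sum.cong) auto
  have "snd ((Tmap ^^ k) x) m = snd ((Tmap ^^ k) x') m" if "\<bar>m\<bar> \<le> int M" for m
    using that assms(2)[of "m + partial_sum (fst x) k"]
    by (simp add: snd_Tmap_iterate shiftZpow_def same_sum[symmetric])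
  then have z: "dZ2 (snd ((Tmap ^^ k) x)) (snd ((Tmap ^^ k) x')) \<le> 3 powr - real (Suc M)"
    by (rule dZ2_le_if_agree)
  show ?thesis using y z unfolding dZ_def by simp
qed

lemma bowen_dist_le:
  assumes "\<And>k. k < n \<Longrightarrow> d ((T ^^ k) x) ((T ^^ k) y) \<le> c" and "0 \<le> c"
  shows "bowen_dist d T n x y \<le> c"
proof -
  have "{d ((T ^^ k) x) ((T ^^ k) y) | k. k < n} = (\<lambda>k. d ((T ^^ k) x) ((T ^^ k) y)) ` {..<n}"
    by auto
  then show ?thesis unfolding bowen_dist_def using assms by (subst Max_le_iff) auto
qed

text \<open>The shift of the \<open>z\<close>-coordinate along an orbit segment of length \<open>n\<close> is a partial sum of
  \<open>y\<close>, hence at most \<open>D + n div D\<close> in absolute value.\<close>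

lemma bowen_dist_le_if_agree:
  assumes "\<forall>j\<ge>1. fst x j \<in> {-1, 0, 1}" and "spaced D (fst x)" and "D \<ge> 1"
    and "\<And>j. 1 \<le> j \<Longrightarrow> j \<le> n + M \<Longrightarrow> fst x j = fst x' j"
    and "\<And>m. \<bar>m\<bar> \<le> int (M + D + n div D) \<Longrightarrow> snd x m = snd x' m"
  shows "bowen_dist dZ Tmap n x x' \<le> 3 powr - real (Suc M)"
proof (rule bowen_dist_le)
  fix k assume k: "k < n"
  have "\<bar>partial_sum (fst x) k\<bar> \<le> int (D + k div D)"
    using abs_partial_sum_le_if_spaced assms(1-3) by blast
  moreover have "k div D \<le> n div D" using k by (simp add: div_le_mono)
  ultimately have "\<bar>partial_sum (fst x) k\<bar> + int M \<le> int (M + D + n div D)" by linarith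
  then show "dZ ((Tmap ^^ k) x) ((Tmap ^^ k) x') \<le> 3 powr - real (Suc M)"
    using k by (intro dZ_Tmap_iterate_le assms(4,5)) auto
qed simp

section \<open>Entropy of spaced systems\<close>

lemma sep_num_le_card_code:
  assumes "f ` X \<subseteq> W" and "finite W"
    and "\<And>x x'. x \<in> X \<Longrightarrow> x' \<in> X \<Longrightarrow> f x = f x' \<Longrightarrow> bowen_dist d T n x x' \<le> e"
  shows "sep_num X d T n e \<le> ereal (real (card W))"
  unfolding sep_num_def
proof (rule SUP_least)
  fix E assume "E \<in> {E. separated X d T n e E}"
  then have E: "E \<subseteq> X" "\<And>x y. x \<in> E \<Longrightarrow> y \<in> E \<Longrightarrow> x \<noteq> y \<Longrightarrow> bowen_dist d T n x y > e"
    unfolding separated_def by auto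
  have "inj_on f E" by (rule inj_onI) (use E assms(3) in force)
  then have "card E = card (f ` E)" by (simp add: card_image)
  also have "\<dots> \<le> card W" using E(1) assms(1,2) by (intro card_mono) auto
  finally show "ereal (real (card E)) \<le> ereal (real (card W))" by simp
qed

lemma Zspace_values:
  assumes "x \<in> Zspace"
  shows "\<forall>j\<ge>1. fst x j \<in> {-1, 0, 1}" and "\<forall>m. snd x m \<in> {-1, 0, 1}"
  using assms unfolding Zspace_def Yspace_def Zspace2_def by (auto simp: mem_Times_iff)

lemma sep_num_le_if_spaced:
  assumes X: "X \<subseteq> Zspace" and spaced: "\<forall>x\<in>X. spaced D (fst x)" and "D \<ge> 1"
    and e: "3 powr - real (Suc M) \<le> e"
  shows "sep_num X dZ Tmap n e
           \<le> ereal (real (3 ^ D * (2 * D + 1) ^ ((n + M) div D) * 3 ^ (2 * (M + D + n div D) + 1)))"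
proof -
  define B where "B = int (M + D + n div D)"
  define r where "r = (n + M) div D"
  define Y where "Y = spaced_words D {1..D * Suc r}"
  define Z where "Z = {g :: int \<Rightarrow> int. (\<forall>m. g m \<noteq> 0 \<longrightarrow> m \<in> {-B..B}) \<and> (\<forall>m. g m \<in> {-1, 0, 1})}"
  define window where "window x = ((\<lambda>j. if j \<in> {1..n + M} then fst x j else 0),
                                     (\<lambda>m. if m \<in> {-B..B} then snd x m else 0))"
    for x :: "(nat \<Rightarrow> int) \<times> (int \<Rightarrow> int)"
  have "n + M < D * Suc r"
  proof -
    have "n + M = D * r + (n + M) mod D" unfolding r_def by simp
    moreover have "(n + M) mod D < D" using \<open>D \<ge> 1\<close> by simp
    ultimately show ?thesis by simp
  qed
  then have "window x \<in> Y \<times> Z" if "x \<in> X" for x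
    using Zspace_values[OF subsetD[OF X that]] bspec[OF spaced that]
      spaced_restrict[of D "fst x" "\<lambda>j. j \<in> {1..n + M}"]
    unfolding window_def Y_def Z_def spaced_words_def by auto
  then have "sep_num X dZ Tmap n e \<le> ereal (real (card (Y \<times> Z)))"
  proof (intro sep_num_le_card_code)
    show "finite (Y \<times> Z)" unfolding Y_def Z_def
      using finite_spaced_words_initial[OF \<open>D \<ge> 1\<close>] finite_supported_functions[of "{-B..B}" "{-1, 0, 1::int}"]
      by (intro finite_cartesian_product) simp_all
    fix x x' assume "x \<in> X" "x' \<in> X" and eq: "window x = window x'"
    have "bowen_dist dZ Tmap n x x' \<le> 3 powr - real (Suc M)"
    proof (rule bowen_dist_le_if_agree[OF Zspace_values(1)[OF subsetD[OF X \<open>x \<in> X\<close>]]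
          bspec[OF spaced \<open>x \<in> X\<close>] \<open>D \<ge> 1\<close>])
      show "fst x j = fst x' j" if "1 \<le> j" "j \<le> n + M" for j
        using that fun_cong[OF arg_cong[OF eq, of fst], of j] unfolding window_def by simp
      show "snd x m = snd x' m" if "\<bar>m\<bar> \<le> int (M + D + n div D)" for m
        using that fun_cong[OF arg_cong[OF eq, of snd], of m] unfolding window_def B_def
        by (simp add: abs_le_iff)
    qed
    then show "bowen_dist dZ Tmap n x x' \<le> e" using e by simp
  qed (simp add: image_subset_iff)
  also have "card (Y \<times> Z) \<le> 3 ^ D * (2 * D + 1) ^ r * 3 ^ (2 * (M + D + n div D) + 1)"
  proof -
    have "card Z \<le> 3 ^ card {-B..B}"
      unfolding Z_def using card_supported_functions_le[of "{-B..B}" "{-1, 0, 1::int}"]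
      by (simp add: numeral_3_eq_3)
    also have "card {-B..B} = 2 * (M + D + n div D) + 1" unfolding B_def by simp
    finally show ?thesis unfolding card_cartesian_product Y_def
      using card_spaced_words_initial_le[OF \<open>D \<ge> 1\<close>] by (intro mult_le_mono) auto
  qed
  finally show ?thesis unfolding r_def by simp
qed

lemma sep_num_nonneg: "sep_num (X :: 'a set) d T n e \<ge> 0"
proof -
  have "{} \<in> {E. separated X d T n e E}" unfolding separated_def by simp
  then have "ereal (real (card ({} :: 'a set))) \<le> sep_num X d T n e"
    unfolding sep_num_def by (rule SUP_upper)
  then show ?thesis by (simp add: zero_ereal_def)
qed

lemma log_sep_rate_nonneg: "log_sep_rate X d T e n \<ge> 0"
proof (cases "sep_num X d T n e = \<infinity>")
  case True then show ?thesis unfolding log_sep_rate_def by simp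
next
  case False
  then obtain t where t: "sep_num X d T n e = ereal t" "t \<ge> 0"
    using sep_num_nonneg[of X d T n e] by (cases "sep_num X d T n e") auto
  have "ln t \<ge> 0"
  proof (cases "t < 1")
    case True
    have "card E = 0" if "separated X d T n e E" for E
    proof -
      have "E \<in> {E. separated X d T n e E}" using that by simp
      then have "ereal (real (card E)) \<le> ereal t"
        unfolding t(1)[symmetric] sep_num_def by (rule SUP_upper)
      then show ?thesis using True by simp
    qed
    then have "sep_num X d T n e \<le> 0" unfolding sep_num_def by (intro SUP_least) auto
    then show ?thesis using t by simp
  qed simp
  then show ?thesis unfolding log_sep_rate_def using t by simp
qed

lemma limsup_log_sep_rate_le:
  assumes bound: "\<And>n. sep_num X d T n e \<le> ereal (exp (C + c * real n))"
    and "0 \<le> C" and "0 \<le> c"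
  shows "limsup (log_sep_rate X d T e) \<le> ereal c"
proof -
  have "log_sep_rate X d T e n \<le> ereal (C / real n + c)" if "n \<ge> 1" for n
  proof -
    obtain t where t: "sep_num X d T n e = ereal t" "0 \<le> t" "t \<le> exp (C + c * real n)"
      using bound[of n] sep_num_nonneg[of X d T n e] by (cases "sep_num X d T n e") auto
    have "ln t \<le> C + c * real n"
    proof (cases "t = 0")
      case False
      then have "ln t \<le> ln (exp (C + c * real n))" using t(2,3) by (subst ln_le_cancel_iff) auto
      then show ?thesis by simp
    qed (use assms(2,3) in simp)
    then have "ln t / real n \<le> C / real n + c" using that by (simp add: divide_simps)
    then show ?thesis unfolding log_sep_rate_def using t(1) by simp
  qed
  then have "limsup (log_sep_rate X d T e) \<le> limsup (\<lambda>n. ereal (C / real n + c))"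
    by (intro Limsup_mono) (auto simp: eventually_sequentially)
  also have "\<dots> = ereal c"
    by (intro lim_imp_Limsup) (auto intro!: tendsto_eq_intros lim_const_over_n)
  finally show ?thesis .
qed

lemma ex_three_powr_le:
  assumes "e > 0"
  shows "\<exists>M. 3 powr - real (Suc M) \<le> (e :: real)"
proof -
  obtain M where "(1 / 3 :: real) ^ M < e" using real_arch_pow_inv[OF assms, of "1 / 3"] by auto
  moreover have "3 powr - real (Suc M) = inverse ((3 :: real) ^ Suc M)"
    by (simp only: powr_minus powr_realpow[of 3] zero_less_numeral)
  moreover have "inverse ((3 :: real) ^ Suc M) \<le> (1 / 3) ^ M"
    by (simp add: power_one_over inverse_eq_divide frac_le)
  ultimately show ?thesis by (metis less_imp_le order_trans)
qed

lemma limsup_log_sep_rate_le_if_spaced: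
  assumes "X \<subseteq> Zspace" and "\<forall>x\<in>X. spaced D (fst x)" and "D \<ge> 1" and "e > 0"
  shows "limsup (log_sep_rate X dZ Tmap e) \<le> ereal ((ln (2 * real D + 1) + 2 * ln 3) / real D)"
proof -
  obtain M where M: "3 powr - real (Suc M) \<le> e" using ex_three_powr_le[OF \<open>e > 0\<close>] by blast
  define c where "c = (ln (2 * real D + 1) + 2 * ln 3) / real D"
  define C where "C = real D * ln 3 + real M / real D * ln (2 * real D + 1) + (2 * real M + 2 * real D + 1) * ln 3"
  have "real (3 ^ D * (2 * D + 1) ^ ((n + M) div D) * 3 ^ (2 * (M + D + n div D) + 1))
          \<le> exp (C + c * real n)" for n
  proof -
    let ?N = "real (3 ^ D * (2 * D + 1) ^ ((n + M) div D) * 3 ^ (2 * (M + D + n div D) + 1))"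
    have "ln ?N = real D * ln 3 + real ((n + M) div D) * ln (2 * real D + 1)
                    + real (2 * (M + D + n div D) + 1) * ln 3"
      by (simp add: ln_mult ln_realpow algebra_simps)
    also have "\<dots> \<le> real D * ln 3 + (real n + real M) / real D * ln (2 * real D + 1)
                    + (2 * real M + 2 * real D + 2 * (real n / real D) + 1) * ln 3"
      using of_nat_div_le_of_nat[of "n + M" D, where 'a = real] of_nat_div_le_of_nat[of n D, where 'a = real]
      by (intro add_mono mult_right_mono order_refl) auto
    also have "\<dots> = C + c * real n" unfolding C_def c_def by (simp add: add_divide_distrib ring_distribs mult_ac)
    finally have "exp (ln ?N) \<le> exp (C + c * real n)" by (simp only: exp_le_cancel_iff)
    moreover have "exp (ln ?N) = ?N" by (rule exp_ln) simp
    ultimately show "?N \<le> exp (C + c * real n)" by simp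
  qed
  then have "sep_num X dZ Tmap n e \<le> ereal (exp (C + c * real n))" for n
    by (intro order_trans[OF sep_num_le_if_spaced[OF assms(1-3) M]]) simp
  moreover have "0 \<le> C" "0 \<le> c" unfolding C_def c_def by auto
  ultimately show ?thesis unfolding c_def by (rule limsup_log_sep_rate_le)
qed

lemma top_entropy_eq_0_if_spaced:
  assumes X: "X \<subseteq> Zspace" and spaced: "\<And>N. \<exists>D\<ge>N. \<forall>x\<in>X. spaced D (fst x)"
  shows "top_entropy X dZ Tmap = 0"
proof -
  have "limsup (log_sep_rate X dZ Tmap e) = 0" if "e > 0" for e
  proof (rule antisym)
    show "limsup (log_sep_rate X dZ Tmap e) \<le> 0"
    proof (rule ereal_le_epsilon2)
      fix \<epsilon> :: real assume "\<epsilon> > 0"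
      have "((\<lambda>x::real. (ln (2 * x + 1) + 2 * ln 3) / x) \<longlongrightarrow> 0) at_top" by real_asymp
      then have "eventually (\<lambda>x::real. (ln (2 * x + 1) + 2 * ln 3) / x < \<epsilon>) at_top"
        using \<open>\<epsilon> > 0\<close> by (rule order_tendstoD)
      then obtain x0 where x0: "\<And>x. x \<ge> x0 \<Longrightarrow> (ln (2 * x + 1) + 2 * ln 3) / x < \<epsilon>"
        unfolding eventually_at_top_linorder by blast
      obtain D where D: "D \<ge> max 1 (nat \<lceil>x0\<rceil>)" "\<forall>x\<in>X. spaced D (fst x)" using spaced by blast
      have "limsup (log_sep_rate X dZ Tmap e) \<le> ereal ((ln (2 * real D + 1) + 2 * ln 3) / real D)"
        using D that by (intro limsup_log_sep_rate_le_if_spaced[OF X]) auto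
      also have "\<dots> \<le> 0 + ereal \<epsilon>" using x0[of "real D"] D(1) by simp
      finally show "limsup (log_sep_rate X dZ Tmap e) \<le> 0 + ereal \<epsilon>" .
    qed
    have "limsup (\<lambda>_::nat. 0::ereal) \<le> limsup (log_sep_rate X dZ Tmap e)"
      by (intro Limsup_mono) (simp add: log_sep_rate_nonneg)
    then show "0 \<le> limsup (log_sep_rate X dZ Tmap e)" by (simp add: Limsup_const)
  qed
  then show ?thesis unfolding top_entropy_def by simp
qed

section \<open>The systems \<open>Xset q i\<close>\<close>

lemma spaced_dclosure:
  assumes x: "x \<in> dclosure dZ Zspace U" and U: "\<forall>u\<in>U. spaced D (fst u)"
  shows "spaced D (fst x)"
  unfolding spaced_def
proof (intro allI impI)
  fix a b assume ab: "D \<le> a" "a < b" "fst x a \<noteq> 0" "fst x b \<noteq> 0"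
  have "(3::real) powr - real b > 0" by simp
  then obtain u where u: "u \<in> U" "dZ x u < 3 powr - real b"
    using x unfolding dclosure_def by blast
  then have d: "dY (fst x) (fst u) < 3 powr - real b" unfolding dZ_def by simp
  have "fst x 0 = 0" using x unfolding dclosure_def Zspace_def Yspace_def by auto
  then have "a \<ge> 1" using ab by (cases a) auto
  then have "fst u a \<noteq> 0" "fst u b \<noteq> 0" using dY_less_imp_eq[OF d] ab by auto
  then show "a + D \<le> b" using U u ab unfolding spaced_def by blast
qed

locale lacunary_levels =
  fixes q :: "nat \<Rightarrow> nat" and i :: nat
  assumes levels_pos: "k \<ge> 1 \<Longrightarrow> 1 \<le> qq q i k"
    and levels_lacunary: "k \<ge> 1 \<Longrightarrow> 6 * qq q i k \<le> qq q i (Suc k)"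
begin

abbreviation Q :: "nat \<Rightarrow> nat" where "Q \<equiv> qq q i"

lemma Q_less_Suc: "k \<ge> 1 \<Longrightarrow> Q k < Q (Suc k)"
  using levels_pos[of k] levels_lacunary[of k] by linarith

lemma Q_mono:
  assumes "1 \<le> m" and "m \<le> n"
  shows "Q m \<le> Q n"
  using assms(2)
proof (induction n rule: dec_induct)
  case (step n) then show ?case using Q_less_Suc[of n] assms(1) by simp
qed simp

lemma Q_ge_index: "k \<ge> 1 \<Longrightarrow> k \<le> Q k"
proof (induction k rule: dec_induct)
  case base then show ?case using levels_pos by simp
next
  case (step k) then show ?case using Q_less_Suc[of k] by simp
qed

lemma level_exists:
  assumes "Q 1 \<le> n"
  shows "\<exists>k\<ge>1. Q k \<le> n \<and> n < Q (Suc k)"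
proof -
  define m where "m = (LEAST m. 1 \<le> m \<and> n < Q m)"
  have "1 \<le> Suc n \<and> n < Q (Suc n)" using Q_ge_index[of "Suc n"] by simp
  then have m: "1 \<le> m" "n < Q m" unfolding m_def by (metis (mono_tags, lifting) LeastI)+
  moreover have "m \<noteq> 1" using m(2) assms by auto
  ultimately obtain k where k: "m = Suc k" "k \<ge> 1" by (cases m) auto
  have "\<not> (1 \<le> k \<and> n < Q k)" using k unfolding m_def by (metis lessI not_less_Least)
  then show ?thesis using k m by auto
qed

lemma Pset_block:
  assumes "p \<in> Pset q i" and "k \<ge> 1"
  obtains s where "s \<le> Q k"
    and "\<And>n. Q k \<le> n \<Longrightarrow> n < Q (Suc k) \<Longrightarrow> p n \<noteq> 0
           \<Longrightarrow> \<exists>j. 1 \<le> j \<and> j \<le> 2 * LL q i k \<and> n = s + j * Q k"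
proof -
  obtain s where s: "s \<le> Q k"
    and eq: "\<And>n. Q k \<le> n \<Longrightarrow> n \<le> Q (Suc k) - 1 \<Longrightarrow> p n = shiftR s (sw q i k) n"
    using assms unfolding Pset_def inR_def by blast
  have "\<exists>j. 1 \<le> j \<and> j \<le> 2 * LL q i k \<and> n = s + j * Q k"
    if "Q k \<le> n" "n < Q (Suc k)" "p n \<noteq> 0" for n
  proof -
    have "p n = shiftR s (sw q i k) n" using eq that by simp
    then have "s < n" and "sw q i k (n - s) \<noteq> 0" using that(3) unfolding shiftR_def by (auto split: if_splits)
    then obtain j where "1 \<le> j" "j \<le> 2 * LL q i k" "n - s = j * Q k"
      unfolding sw_def by (auto split: if_splits)
    then show ?thesis using \<open>s < n\<close> by (intro exI[of _ j]) auto
  qed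
  then show thesis using s that by blast
qed

lemma Pset_nonzero_bound:
  assumes "p \<in> Pset q i" and "k \<ge> 1" and "Q k \<le> a" and "a < Q (Suc k)" and "p a \<noteq> 0"
  shows "3 * a \<le> 3 * Q k + 2 * Q (Suc k)"
proof -
  obtain s j where "s \<le> Q k" "j \<le> 2 * LL q i k" "a = s + j * Q k"
    using Pset_block[OF assms(1,2)] assms(3-5) by metis
  moreover have "3 * (j * Q k) \<le> 2 * (LL q i k * (3 * Q k))"
    using mult_le_mono1[OF \<open>j \<le> 2 * LL q i k\<close>, of "Q k"] by simp
  moreover have "LL q i k * (3 * Q k) \<le> Q (Suc k)" unfolding LL_def by simp
  ultimately show ?thesis by linarith
qed

lemma Pset_spaced:
  assumes p: "p \<in> Pset q i" and "K \<ge> 1"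
  shows "spaced (Q K) p"
  unfolding spaced_def
proof (intro allI impI)
  fix a b assume ab: "Q K \<le> a" "a < b" and nz: "p a \<noteq> 0" "p b \<noteq> 0"
  have "Q 1 \<le> Q K" using Q_mono[of 1 K] \<open>K \<ge> 1\<close> by simp
  then obtain ka kb where ka: "ka \<ge> 1" "Q ka \<le> a" "a < Q (Suc ka)"
    and kb: "kb \<ge> 1" "Q kb \<le> b" "b < Q (Suc kb)"
    using level_exists ab by (metis le_trans less_imp_le)
  have "K \<le> ka" using Q_mono[of "Suc ka" K] ab ka by (cases "K \<le> ka") auto
  with \<open>K \<ge> 1\<close> have QK: "Q K \<le> Q ka" by (rule Q_mono)
  have "ka \<le> kb" using Q_mono[of "Suc kb" ka] ab ka kb by (cases "ka \<le> kb") auto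
  then consider "ka = kb" | "Suc ka \<le> kb" by linarith
  then show "a + Q K \<le> b"
  proof cases
    case 1
    obtain s where blk: "\<And>n. Q ka \<le> n \<Longrightarrow> n < Q (Suc ka) \<Longrightarrow> p n \<noteq> 0
           \<Longrightarrow> \<exists>j. 1 \<le> j \<and> j \<le> 2 * LL q i ka \<and> n = s + j * Q ka"
      using Pset_block[OF p ka(1)] by blast
    obtain ja jb where "a = s + ja * Q ka" "b = s + jb * Q ka"
      using blk[OF ka(2,3) nz(1)] blk[of b] kb nz(2) 1 by blast
    then have "ja < jb" and "b = a + (jb - ja) * Q ka" using ab by (auto simp: diff_mult_distrib)
    moreover have "Q ka \<le> (jb - ja) * Q ka" using \<open>ja < jb\<close> by (simp add: Suc_leI)
    ultimately show ?thesis using QK by linarith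
  next
    case 2
    have "Q (Suc ka) \<le> b" using Q_mono[OF _ 2] kb by simp
    moreover have "3 * a \<le> 3 * Q ka + 2 * Q (Suc ka)" using Pset_nonzero_bound[OF p ka nz(1)] .
    moreover have "6 * Q ka \<le> Q (Suc ka)" using levels_lacunary[OF ka(1)] .
    ultimately show ?thesis using QK by linarith
  qed
qed

lemma Xset_spaced:
  assumes "K \<ge> 1" and "x \<in> Xset q i"
  shows "spaced (Q K) (fst x)"
proof -
  have "spaced (Q K) (fst u)" if "u \<in> (\<Union>n. (Tmap ^^ n) ` (Pset q i \<times> Zspace2))" for u
  proof -
    from that obtain m p z where u: "u = (Tmap ^^ m) (p, z)" and p: "p \<in> Pset q i" by blast
    have "\<forall>n\<ge>1. fst u n = p (n + m)" unfolding u by (simp add: fst_Tmap_iterate)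
    with Pset_spaced[OF p \<open>K \<ge> 1\<close>] levels_pos[OF \<open>K \<ge> 1\<close>] show ?thesis by (rule spaced_shift)
  qed
  then show ?thesis using assms(2) unfolding Xset_def by (intro spaced_dclosure) blast+
qed

lemma top_entropy_Xset: "top_entropy (Xset q i) dZ Tmap = 0"
proof (rule top_entropy_eq_0_if_spaced)
  show "Xset q i \<subseteq> Zspace" unfolding Xset_def dclosure_def by blast
  show "\<exists>D\<ge>N. \<forall>x\<in>Xset q i. spaced D (fst x)" for N
    using Q_ge_index[of "Suc N"] Xset_spaced[of "Suc N"] by (intro exI[of _ "Q (Suc N)"]) auto
qed

end

lemma lacunary_levels_qq:
  fixes q :: "nat \<Rightarrow> nat"
  assumes q1: "q 1 \<ge> 2" and growth: "\<forall>k\<ge>1. q (Suc k) > q k ^ 4 + 3 * q k" and "i \<le> 3"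
  shows "lacunary_levels q i"
proof -
  have q_ge_2: "q n \<ge> 2" if "n \<ge> 1" for n
    using that
  proof (induction n rule: dec_induct)
    case (step n)
    have "q (Suc n) > q n ^ 4 + 3 * q n" using growth step(1) by simp
    then show ?case using step.IH by linarith
  qed (use q1 in simp)
  have q_lacunary: "6 * q n \<le> q (Suc n)" if "n \<ge> 1" for n
  proof -
    have "2 ^ 3 \<le> q n ^ 3" using q_ge_2[OF that] by (rule power_mono) simp
    then have "8 * q n \<le> q n ^ 4" by (simp add: power_Suc[of _ 3, simplified])
    moreover have "q (Suc n) > q n ^ 4 + 3 * q n" using growth that by simp
    ultimately show ?thesis by linarith
  qed
  have "1 \<le> qq q i k \<and> 6 * qq q i k \<le> qq q i (Suc k)" if "k \<ge> 1" for k
  proof -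
    have q0: "6 * q (2 * k) \<le> q (Suc (2 * k))" "q (2 * k) \<ge> 2"
      and q1: "6 * q (Suc (2 * k)) \<le> q (Suc (Suc (2 * k)))" "q (Suc (2 * k)) \<ge> 2"
      and q2: "6 * q (Suc (Suc (2 * k))) \<le> q (Suc (Suc (Suc (2 * k))))"
      using q_lacunary q_ge_2 that by simp_all
    have "i = 0 \<or> i = 1 \<or> i = 2 \<or> i = 3" using \<open>i \<le> 3\<close> by auto
    then show ?thesis unfolding qq_def using q0 q1 q2 by (elim disjE) (simp_all, linarith+)
  qed
  then show ?thesis by unfold_locales blast+
qed

text \<open>Only \<open>q1\<close> and \<open>cond_i\<close> are needed: \<open>q_inc\<close> follows from \<open>cond_i\<close>, and the hypotheses on
  \<open>tau\<close> concern other properties of the systems \<open>X\<^sub>i\<close> in the paper.\<close>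

theorem mainTheorem6:
  fixes tau :: "nat \<Rightarrow> real" and q :: "nat \<Rightarrow> nat"
  assumes tau_pos: "\<forall>n. tau n > 0"
    and tau_noninc: "\<forall>m n. m \<le> n \<longrightarrow> tau n \<le> tau m"
    and tau_lim: "tau \<longlonglongrightarrow> 0"
    and q1: "q 1 \<ge> 2"
    and q_inc: "\<forall>k\<ge>1. q k < q (Suc k)"
    and cond_i: "\<forall>k\<ge>1. q (Suc k) > q k ^ 4 + 3 * q k"
    and cond_ii: "\<forall>k\<ge>1. tau (nat \<lceil>real (q (Suc k)) / 3\<rceil>) < 1 / (16 * real (q k))"
  shows "\<forall>i\<in>{0,1,2,3::nat}. top_entropy (Xset q i) dZ Tmap = 0"
proof
  fix i :: nat assume "i \<in> {0, 1, 2, 3}"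
  then have "lacunary_levels q i" using lacunary_levels_qq[OF q1 cond_i] by auto
  then show "top_entropy (Xset q i) dZ Tmap = 0" by (rule lacunary_levels.top_entropy_Xset)
qed

end
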